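(* Let $F:\mathbb{R}^n\to\mathbb{H}^{n+1}\subset\mathbb{L}^{n+2}$ be the immersion of a horosphere in the hyperbolic space, with unit normal vector field $N$ and all principal curvatures equal to $\kappa=\pm1$. Then the solution to the mean curvature flow with initial data $F$ is $$\widehat F^t(x)=\cosh(nt)F(x)+\kappa\sinh(nt)N(x),$$ for all $t\in\mathbb{R}$. Moreover, $\widehat F^t(\mathbb{R}^n)$ is a horosphere for all $t\in\mathbb{R}$.
   Context: $\mathbb{H}^{n+1}$ is the hyperboloid model of hyperbolic space in the Lorentzian space $\mathbb{L}^{n+2}$. Second fundamental form $h(v,w)=-\langle dN(v),dF(w)\rangle$, principal curvatures are its eigenvalues, mean curvature $H=\sum_i\kappa_i$. A family $\widehat F:M\times I\to\mathbb{H}^{n+1}$, $0\in I$, solves the mean curvature flow with initial condition $F$ if $\partial_t\widehat F=\widehat H\widehat N$ and $\widehat F(\cdot,0)=F$, where $\widehat N^t$ is a unit normal of $\widehat F^t$ and $\widehat H^t$ the corresponding mean curvature. *)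

theory Defs
  imports "HOL-Analysis.Analysis"
begin

text \<open>Lorentzian space L^(n+2) is modelled as (real^'n) \<times> real \<times> real,
  the last coordinate being the time-like one.\<close>

type_synonym 'n lor = "(real^'n) \<times> real \<times> real"

definition lorentz :: "'n::finite lor \<Rightarrow> 'n lor \<Rightarrow> real" where
  "lorentz p q = fst p \<bullet> fst q + fst (snd p) * fst (snd q) - snd (snd p) * snd (snd q)"

definition hyp_space :: "'n::finite lor set" where
  "hyp_space = {p. lorentz p p = -1 \<and> snd (snd p) > 0}"

definition horosphere :: "'n::finite lor set \<Rightarrow> bool" where
  "horosphere S \<longleftrightarrow> (\<exists>v. lorentz v v = 0 \<and> snd (snd v) > 0 \<and>
      S = {p \<in> hyp_space. lorentz p v = -1})"

definition dif :: "(real^'n \<Rightarrow> 'n::finite lor) \<Rightarrow> real^'n \<Rightarrow> real^'n \<Rightarrow> 'n lor" where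
  "dif F x = frechet_derivative F (at x)"

definition immersion_H :: "(real^'n \<Rightarrow> 'n::finite lor) \<Rightarrow> bool" where
  "immersion_H F \<longleftrightarrow> (\<forall>x. F x \<in> hyp_space \<and> F differentiable (at x) \<and> inj (dif F x))"

definition unit_normal :: "(real^'n \<Rightarrow> 'n::finite lor) \<Rightarrow> (real^'n \<Rightarrow> 'n lor) \<Rightarrow> bool" where
  "unit_normal F N \<longleftrightarrow> (\<forall>x. N differentiable (at x) \<and> lorentz (N x) (N x) = 1 \<and>
      lorentz (N x) (F x) = 0 \<and> (\<forall>v. lorentz (N x) (dif F x v) = 0))"

definition ind_metric :: "(real^'n \<Rightarrow> 'n::finite lor) \<Rightarrow> real^'n \<Rightarrow> real^'n \<Rightarrow> real^'n \<Rightarrow> real" where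
  "ind_metric F x v w = lorentz (dif F x v) (dif F x w)"

definition sff :: "(real^'n \<Rightarrow> 'n::finite lor) \<Rightarrow> (real^'n \<Rightarrow> 'n lor) \<Rightarrow> real^'n \<Rightarrow> real^'n \<Rightarrow> real^'n \<Rightarrow> real" where
  "sff F N x v w = - lorentz (dif N x v) (dif F x w)"

definition shape_op :: "(real^'n \<Rightarrow> 'n::finite lor) \<Rightarrow> (real^'n \<Rightarrow> 'n lor) \<Rightarrow> real^'n \<Rightarrow> real^'n \<Rightarrow> real^'n" where
  "shape_op F N x = (THE S. linear S \<and> (\<forall>v w. ind_metric F x (S v) w = sff F N x v w))"

definition principal_curvatures :: "(real^'n \<Rightarrow> 'n::finite lor) \<Rightarrow> (real^'n \<Rightarrow> 'n lor) \<Rightarrow> real^'n \<Rightarrow> real set" where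
  "principal_curvatures F N x = {k. \<exists>v. v \<noteq> 0 \<and> shape_op F N x v = k *\<^sub>R v}"

definition mean_curv :: "(real^'n \<Rightarrow> 'n::finite lor) \<Rightarrow> (real^'n \<Rightarrow> 'n lor) \<Rightarrow> real^'n \<Rightarrow> real" where
  "mean_curv F N x = trace (matrix (shape_op F N x))"

definition mcf_solution :: "real set \<Rightarrow> (real^'n \<Rightarrow> 'n::finite lor) \<Rightarrow> (real^'n \<Rightarrow> real \<Rightarrow> 'n lor) \<Rightarrow> bool" where
  "mcf_solution I F Fh \<longleftrightarrow>
     (\<forall>x. Fh x 0 = F x) \<and> (\<forall>t\<in>I. immersion_H (\<lambda>x. Fh x t)) \<and>
     (\<exists>Nh. \<forall>t\<in>I. unit_normal (\<lambda>x. Fh x t) (\<lambda>x. Nh x t) \<and>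
        (\<forall>x. ((\<lambda>s. Fh x s) has_vector_derivative
               (mean_curv (\<lambda>y. Fh y t) (\<lambda>y. Nh y t) x *\<^sub>R Nh x t)) (at t within I)))"

end

(* A horosphere is the set of points p of the hyperboloid with <p, v> = -1 for a future
   null vector v. Its unit normals are necessarily +-(v - F), so the hypothesis on the
   principal curvatures forces N = kappa (v - F); then dN = -kappa dF, the shape operator is
   kappa times the identity and the mean curvature is the constant n kappa. Consequently
   cosh(nt) F + kappa sinh(nt) N = exp(-nt) F + sinh(nt) v is the image of F under a
   hyperbolic translation fixing the ideal point of v. That translation maps the horosphere
   of v onto the horosphere of exp(nt) v, the translated immersion again has the normal
   kappa (exp(nt) v - F^t) and mean curvature n kappa, and the time derivative
   n (cosh(nt) v - exp(-nt) F) is exactly n kappa times this normal. *)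

theory Submission
  imports Defs
begin

definition space_part :: "'n::finite lor \<Rightarrow> (real^'n) \<times> real" where
  "space_part q = (fst q, fst (snd q))"

definition time_part :: "'n::finite lor \<Rightarrow> real" where
  "time_part q = snd (snd q)"

lemma lorentz_space_time: "lorentz p q = space_part p \<bullet> space_part q - time_part p * time_part q"
  by (cases p; cases q) (auto simp: lorentz_def space_part_def time_part_def)

lemma lorentz_commute: "lorentz p q = lorentz q p"
  by (simp add: lorentz_def inner_commute mult.commute)

lemma lorentz_add_left [simp]: "lorentz (p + q) r = lorentz p r + lorentz q r"
  and lorentz_add_right [simp]: "lorentz r (p + q) = lorentz r p + lorentz r q"
  and lorentz_diff_left [simp]: "lorentz (p - q) r = lorentz p r - lorentz q r"
  and lorentz_diff_right [simp]: "lorentz r (p - q) = lorentz r p - lorentz r q"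
  and lorentz_scaleR_left [simp]: "lorentz (c *\<^sub>R p) r = c * lorentz p r"
  and lorentz_scaleR_right [simp]: "lorentz r (c *\<^sub>R p) = c * lorentz r p"
  and lorentz_minus_left [simp]: "lorentz (- p) r = - lorentz p r"
  and lorentz_minus_right [simp]: "lorentz r (- p) = - lorentz r p"
  and lorentz_zero_left [simp]: "lorentz 0 r = 0"
  and lorentz_zero_right [simp]: "lorentz r 0 = 0"
  by (simp_all add: lorentz_def inner_add_left inner_add_right inner_diff_left
      inner_diff_right algebra_simps)

lemma bounded_bilinear_lorentz: "bounded_bilinear (lorentz :: 'n::finite lor \<Rightarrow> _)"
proof -
  have "bilinear (lorentz :: 'n::finite lor \<Rightarrow> _)"
    unfolding bilinear_def linear_iff by simp
  then show ?thesis
    using bilinear_conv_bounded_bilinear by blast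
qed

text \<open>Cauchy--Schwarz in the spatial coordinates.\<close>

lemma lorentz_pos_orthogonal_timelike:
  assumes "lorentz p p = -1" "lorentz w p = 0" "w \<noteq> 0"
  shows "lorentz w w > 0"
proof -
  define a s b t where "a = space_part w" "s = space_part p" "b = time_part w" "t = time_part p"
  have tt: "t * t = s \<bullet> s + 1" and ab: "a \<bullet> s = b * t"
    using assms(1,2) by (simp_all add: lorentz_space_time a_s_b_t_def)
  have ww: "lorentz w w = a \<bullet> a - b * b"
    by (simp add: lorentz_space_time a_s_b_t_def)
  have "(a \<bullet> a - b * b) * (s \<bullet> s + 1) = a \<bullet> a * (s \<bullet> s) + a \<bullet> a - (a \<bullet> s)\<^sup>2"
    using tt ab by (simp add: algebra_simps power2_eq_square)
  also have "\<dots> \<ge> a \<bullet> a"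
    using Cauchy_Schwarz_ineq[of a s] by simp
  finally have key: "(a \<bullet> a - b * b) * (s \<bullet> s + 1) \<ge> a \<bullet> a" .
  have "a \<noteq> 0"
  proof
    assume "a = 0"
    moreover have "t \<noteq> 0"
      using tt inner_ge_zero[of s] by (auto simp del: inner_ge_zero)
    ultimately have "b = 0"
      using ab by simp
    with \<open>a = 0\<close> have "w = 0"
      by (cases w) (auto simp: a_s_b_t_def space_part_def time_part_def zero_prod_def)
    with assms(3) show False ..
  qed
  then have "a \<bullet> a > 0"
    by simp
  with key have "(a \<bullet> a - b * b) * (s \<bullet> s + 1) > 0"
    by linarith
  moreover have "s \<bullet> s + 1 > 0"
    by (simp add: add_nonneg_pos)
  ultimately show ?thesis
    using ww zero_less_mult_pos2 by metis
qed

text \<open>Reverse Cauchy--Schwarz.\<close>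

lemma time_part_pos_of_lorentz_neg:
  assumes "lorentz q q = -1" "lorentz v v = 0" "time_part v > 0" "lorentz q v < 0"
  shows "time_part q > 0"
proof (rule ccontr)
  assume "\<not> time_part q > 0"
  define a s where "a = space_part q" "s = space_part v"
  have aa: "a \<bullet> a = time_part q * time_part q - 1" and ss: "s \<bullet> s = time_part v * time_part v"
    and as: "a \<bullet> s < time_part q * time_part v"
    using assms(1,2,4) by (simp_all add: lorentz_space_time a_s_def)
  have "time_part q * time_part v \<le> 0"
    using \<open>\<not> time_part q > 0\<close> assms(3) by (simp add: mult_nonpos_nonneg)
  with as have "(- (time_part q * time_part v))\<^sup>2 < (- (a \<bullet> s))\<^sup>2"
    by (intro power_strict_mono) auto
  moreover have "a \<bullet> a * (s \<bullet> s) < (time_part q * time_part v)\<^sup>2"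
    using aa ss assms(3) by (simp add: power2_eq_square algebra_simps)
  ultimately show False
    using Cauchy_Schwarz_ineq[of a s] by simp
qed

lemma has_derivative_lorentz:
  assumes "(f has_derivative f') (at x)" "(g has_derivative g') (at x)"
  shows "((\<lambda>y. lorentz (f y) (g y)) has_derivative
           (\<lambda>h. lorentz (f x) (g' h) + lorentz (f' h) (g x))) (at x)"
  using bounded_bilinear.FDERIV[OF bounded_bilinear_lorentz assms] .

lemma has_derivative_const_fun_zero:
  assumes "(f has_derivative f') (at x)" "\<And>y. f y = c"
  shows "f' h = 0"
proof -
  have "f = (\<lambda>y. c)"
    using assms(2) by blast
  then have "(f has_derivative (\<lambda>h. 0)) (at x)"
    by simp
  then show ?thesis
    using has_derivative_unique[OF assms(1)] by metis
qed

lemma dif_eqI: "(G has_derivative G') (at x) \<Longrightarrow> dif G x = G'"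
  unfolding dif_def by (metis frechet_derivative_at)

lemma has_derivative_dif: "G differentiable (at x) \<Longrightarrow> (G has_derivative dif G x) (at x)"
  unfolding dif_def by (rule frechet_derivative_works[THEN iffD1])

lemma lorentz_dif_const:
  assumes "G differentiable (at x)" "\<And>y. lorentz (G y) c = k"
  shows "lorentz (dif G x h) c = 0"
  using has_derivative_const_fun_zero[OF
      has_derivative_lorentz[OF has_derivative_dif[OF assms(1)] has_derivative_const] assms(2)]
  by simp

lemma lorentz_dif_self:
  assumes "G differentiable (at x)" "\<And>y. lorentz (G y) (G y) = k"
  shows "lorentz (dif G x h) (G x) = 0"
  using has_derivative_const_fun_zero[OF
      has_derivative_lorentz[OF has_derivative_dif[OF assms(1)] has_derivative_dif[OF assms(1)]]
      assms(2)]
  by (simp add: lorentz_commute[of "G x"])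

lemma immersion_H_lorentz_self: "immersion_H F \<Longrightarrow> lorentz (F x) (F x) = -1"
  by (simp add: immersion_H_def hyp_space_def)

lemma immersion_H_lorentz_dif_self:
  "immersion_H F \<Longrightarrow> lorentz (dif F x h) (F x) = 0"
  by (rule lorentz_dif_self) (auto simp: immersion_H_def hyp_space_def)

section \<open>Shape operators that are multiples of the identity\<close>

lemma shape_op_eq_scaleR:
  fixes F N :: "real^'n \<Rightarrow> 'n::finite lor"
  assumes F: "immersion_H F" and dN: "\<And>h. dif N x h = - (c *\<^sub>R dif F x h)"
  shows "shape_op F N x = (\<lambda>v. c *\<^sub>R v)"
  unfolding shape_op_def
proof (rule the_equality)
  have lin: "linear (dif F x)" and inj: "inj (dif F x)"
    using F has_derivative_linear[OF has_derivative_dif] by (auto simp: immersion_H_def)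
  then show "linear (\<lambda>v. c *\<^sub>R v) \<and> (\<forall>v w. ind_metric F x (c *\<^sub>R v) w = sff F N x v w)"
    by (simp add: ind_metric_def sff_def dN linear_scale linear_scaleR)
  fix S
  assume S: "linear S \<and> (\<forall>v w. ind_metric F x (S v) w = sff F N x v w)"
  show "S = (\<lambda>v. c *\<^sub>R v)"
  proof
    fix v
    define u where "u = S v - c *\<^sub>R v"
    have "lorentz (dif F x u) (dif F x w) = 0" for w
      using S lin by (simp add: u_def ind_metric_def sff_def dN linear_diff linear_scale)
    then have "dif F x u = 0"
      using lorentz_pos_orthogonal_timelike[OF immersion_H_lorentz_self[OF F]
          immersion_H_lorentz_dif_self[OF F]] by fastforce
    then have "u = 0"
      using inj lin by (metis linear_0 injD)
    then show "S v = c *\<^sub>R v"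
      by (simp add: u_def)
  qed
qed

lemma mean_curv_eq_scaleR:
  fixes F N :: "real^'n \<Rightarrow> 'n::finite lor"
  shows "shape_op F N x = (\<lambda>v. c *\<^sub>R v) \<Longrightarrow> mean_curv F N x = c * real CARD('n)"
  by (simp add: mean_curv_def trace_def matrix_def axis_def)


lemma principal_curvatures_eq_scaleR:
  assumes "shape_op F N x = (\<lambda>v. c *\<^sub>R v)"
  shows "principal_curvatures F N x = {c}"
proof -
  have "axis undefined (1::real) \<noteq> (0 :: real^'n)"
    by (simp add: axis_eq_0_iff)
  then show ?thesis
    unfolding principal_curvatures_def assms by auto
qed

section \<open>Immersions into a horosphere\<close>

definition horo_set :: "'n::finite lor \<Rightarrow> 'n lor set" where
  "horo_set v = {p \<in> hyp_space. lorentz p v = -1}"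

lemma horosphere_iff:
  "horosphere S \<longleftrightarrow> (\<exists>v. lorentz v v = 0 \<and> time_part v > 0 \<and> S = horo_set v)"
  by (simp add: horosphere_def horo_set_def time_part_def)

lemma dim_span_timelike_null:
  fixes p v :: "'n::finite lor"
  assumes "lorentz p p = -1" "lorentz p v = -1" "lorentz v v = 0"
  shows "dim (span {p, v}) = 2"
proof -
  have "p \<notin> span {v}"
    using assms by (auto simp: span_singleton)
  moreover have "v \<noteq> 0" "p \<noteq> v"
    using assms by auto
  ultimately have "independent {p, v}"
    by (intro independent_insertI) (auto simp: independent_empty)
  then show ?thesis
    using dim_eq_card_independent[of "{p, v}"] \<open>p \<noteq> v\<close> by simp
qed

lemma dim_lorentz_orthogonal_horo:
  fixes p v :: "'n::finite lor"
  assumes pp: "lorentz p p = -1" and pv: "lorentz p v = -1" and vv: "lorentz v v = 0"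
  shows "dim {w. lorentz w p = 0 \<and> lorentz w v = 0} = CARD('n)"
proof -
  define W where "W = {w. lorentz w p = 0 \<and> lorentz w v = 0}"
  define T where "T = span {p, v}"
  have vp: "lorentz v p = -1"
    using pv lorentz_commute by metis
  have subW: "subspace W"
    unfolding subspace_def W_def by simp
  have "u \<in> {a + b |a b. a \<in> W \<and> b \<in> T}" for u
  proof -
    define z where "z = (- lorentz u v) *\<^sub>R p + (lorentz u v - lorentz u p) *\<^sub>R v"
    have "u - z \<in> W"
      using pp pv vp vv by (simp add: W_def z_def algebra_simps)
    moreover have "z \<in> T"
      unfolding T_def z_def by (intro span_add span_scale span_base) auto
    ultimately show ?thesis
      by (metis (mono_tags, lifting) diff_add_cancel mem_Collect_eq)
  qed
  then have sum: "{a + b |a b. a \<in> W \<and> b \<in> T} = UNIV"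
    by blast
  have int: "W \<inter> T = {0}"
  proof -
    have "y = 0" if "y \<in> W" "y \<in> T" for y
    proof -
      obtain k m where y: "y = k *\<^sub>R p + m *\<^sub>R v"
        using \<open>y \<in> T\<close> unfolding T_def span_insert span_singleton by (auto simp: algebra_simps)
      have "-k - m = 0" "-k = 0"
        using \<open>y \<in> W\<close> pp pv vp vv by (simp_all add: W_def y)
      then show ?thesis
        by (simp add: y)
    qed
    then show ?thesis
      using subW subspace_0 span_zero unfolding T_def by blast
  qed
  have "dim (UNIV :: 'n lor set) + dim (W \<inter> T) = dim W + dim T"
    using dim_sums_Int[OF subW, of T] sum by (simp add: T_def)
  moreover have "dim T = 2"
    unfolding T_def using dim_span_timelike_null[OF pp pv vv] .
  ultimately show ?thesis
    using int by (simp add: W_def)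
qed

lemma range_dif_horo_immersion:
  fixes F :: "real^'n \<Rightarrow> 'n::finite lor"
  assumes F: "immersion_H F" and Fv: "\<And>y. lorentz (F y) v = -1" and vv: "lorentz v v = 0"
  shows "range (dif F x) = {w. lorentz w (F x) = 0 \<and> lorentz w v = 0}"
proof (rule subspace_dim_equal)
  have "F differentiable (at x)" and inj: "inj (dif F x)"
    using F by (auto simp: immersion_H_def)
  then have lin: "linear (dif F x)"
    using has_derivative_linear[OF has_derivative_dif] by blast
  then show "subspace (range (dif F x))"
    by (simp add: linear_subspace_image)
  show "subspace {w. lorentz w (F x) = 0 \<and> lorentz w v = 0}"
    unfolding subspace_def by simp
  show "range (dif F x) \<subseteq> {w. lorentz w (F x) = 0 \<and> lorentz w v = 0}"
    using immersion_H_lorentz_dif_self[OF F] lorentz_dif_const[OF \<open>F differentiable (at x)\<close> Fv]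
    by auto
  show "dim {w. lorentz w (F x) = 0 \<and> lorentz w v = 0} \<le> dim (range (dif F x))"
    using dim_lorentz_orthogonal_horo[OF immersion_H_lorentz_self[OF F] Fv vv]
      dim_image_eq[OF lin, of UNIV] inj by simp
qed

lemma dif_horo_normal:
  assumes "F differentiable (at x)"
  shows "dif (\<lambda>y. c *\<^sub>R (v - F y)) x = (\<lambda>h. - (c *\<^sub>R dif F x h))"
proof (rule dif_eqI)
  have "((\<lambda>y. c *\<^sub>R (v - F y)) has_derivative (\<lambda>h. c *\<^sub>R (0 - dif F x h))) (at x)"
    by (intro has_derivative_scaleR_right has_derivative_diff has_derivative_const
        has_derivative_dif assms)
  then show "((\<lambda>y. c *\<^sub>R (v - F y)) has_derivative (\<lambda>h. - (c *\<^sub>R dif F x h))) (at x)"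
    by simp
qed

lemma unit_normal_horo:
  assumes F: "immersion_H F" and Fv: "\<And>y. lorentz (F y) v = -1" and vv: "lorentz v v = 0"
    and cc: "c * c = 1"
  shows "unit_normal F (\<lambda>y. c *\<^sub>R (v - F y))"
  unfolding unit_normal_def
proof (intro allI conjI)
  fix x h
  have Fx: "F differentiable (at x)"
    using F by (simp add: immersion_H_def)
  have FF: "lorentz (F x) (F x) = -1" and vF: "lorentz v (F x) = -1"
    using immersion_H_lorentz_self[OF F] Fv lorentz_commute by metis+
  show "(\<lambda>y. c *\<^sub>R (v - F y)) differentiable (at x)"
    using Fx by (intro derivative_intros)
  show "lorentz (c *\<^sub>R (v - F x)) (c *\<^sub>R (v - F x)) = 1"
    using FF vF Fv[of x] vv cc by (simp add: algebra_simps)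
  show "lorentz (c *\<^sub>R (v - F x)) (F x) = 0"
    using FF vF by simp
  show "lorentz (c *\<^sub>R (v - F x)) (dif F x h) = 0"
    using immersion_H_lorentz_dif_self[OF F] lorentz_dif_const[OF Fx Fv]
    by (simp add: lorentz_commute)
qed

lemma shape_op_horo_normal:
  assumes F: "immersion_H F"
  shows "shape_op F (\<lambda>y. c *\<^sub>R (v - F y)) x = (\<lambda>u. c *\<^sub>R u)"
  using F by (intro shape_op_eq_scaleR) (simp_all add: immersion_H_def dif_horo_normal)

lemma unit_normal_horo_decomp:
  assumes F: "immersion_H F" and Fv: "\<And>y. lorentz (F y) v = -1" and vv: "lorentz v v = 0"
    and N: "unit_normal F N"
  shows "N y = lorentz (N y) v *\<^sub>R (v - F y)"
proof -
  define w where "w = N y - lorentz (N y) v *\<^sub>R (v - F y)"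
  have FF: "lorentz (F y) (F y) = -1" and vF: "lorentz v (F y) = -1"
    using immersion_H_lorentz_self[OF F] Fv lorentz_commute by metis+
  have NF: "lorentz (N y) (F y) = 0" and NdF: "\<And>h. lorentz (N y) (dif F y h) = 0"
    using N by (auto simp: unit_normal_def)
  have wF: "lorentz w (F y) = 0"
    using NF vF FF by (simp add: w_def algebra_simps)
  moreover have "lorentz w v = 0"
    using vv Fv[of y] by (simp add: w_def algebra_simps)
  ultimately obtain h where h: "w = dif F y h"
    using range_dif_horo_immersion[OF F Fv vv] by blast
  have "lorentz (dif F y h) v = 0" "lorentz (dif F y h) (F y) = 0"
    using range_dif_horo_immersion[OF F Fv vv, of y] by blast+
  then have "lorentz w (dif F y h) = 0"
    using NdF[of h] by (simp add: w_def lorentz_commute[of _ "dif F y h"])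
  then have "w = 0"
    using lorentz_pos_orthogonal_timelike[OF FF wF] h by fastforce
  then show ?thesis
    by (simp add: w_def)
qed

lemma unit_normal_horo_eq:
  fixes F N :: "real^'n \<Rightarrow> 'n::finite lor"
  assumes F: "immersion_H F" and Fv: "\<And>y. lorentz (F y) v = -1" and vv: "lorentz v v = 0"
    and N: "unit_normal F N" and pc: "principal_curvatures F N x = {\<kappa>}"
  shows "N x = \<kappa> *\<^sub>R (v - F x)"
proof -
  define b where "b y = lorentz (N y) v" for y
  have Nb: "N = (\<lambda>y. b y *\<^sub>R (v - F y))"
    using unit_normal_horo_decomp[OF F Fv vv N] by (auto simp: b_def)
  have bb: "b y * b y = 1" for y
  proof -
    have "b y * b y * lorentz (v - F y) (v - F y) = lorentz (N y) (N y)"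
      by (simp only: Nb lorentz_scaleR_left lorentz_scaleR_right mult.assoc)
    also have "\<dots> = 1"
      using N by (simp add: unit_normal_def)
    moreover have "lorentz (v - F y) (v - F y) = 1"
      using immersion_H_lorentz_self[OF F] Fv[of y] vv lorentz_commute[of v "F y"] by simp
    ultimately show ?thesis
      by simp
  qed
  have Fx: "(F has_derivative dif F x) (at x)"
    using F by (simp add: immersion_H_def has_derivative_dif)
  have Nx: "(N has_derivative dif N x) (at x)"
    using N by (simp add: unit_normal_def has_derivative_dif)
  define db where "db h = lorentz (N x) 0 + lorentz (dif N x h) v" for h
  have hb: "(b has_derivative db) (at x)"
    unfolding b_def[abs_def] db_def[abs_def] by (rule has_derivative_lorentz[OF Nx has_derivative_const])
  have "b x * db h + db h * b x = 0" for h
    by (rule has_derivative_const_fun_zero[OF has_derivative_mult[OF hb hb] bb])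
  moreover have "b x \<noteq> 0"
    using bb[of x] by auto
  ultimately have db: "db h = 0" for h
    by simp
  have "(N has_derivative (\<lambda>h. b x *\<^sub>R (0 - dif F x h) + db h *\<^sub>R (v - F x))) (at x)"
    unfolding Nb by (intro has_derivative_scaleR hb has_derivative_diff has_derivative_const Fx)
  then have "dif N x = (\<lambda>h. - (b x *\<^sub>R dif F x h))"
    using db by (simp add: dif_eqI)
  then have "shape_op F N x = (\<lambda>u. b x *\<^sub>R u)"
    using F by (intro shape_op_eq_scaleR) simp_all
  then have "b x = \<kappa>"
    using pc principal_curvatures_eq_scaleR by (metis singleton_inject)
  then show ?thesis
    by (simp add: Nb)
qed

section \<open>Translating horospheres along their axis\<close>

text \<open>The hyperbolic translation fixing the ideal point of the null vector \<^term>\<open>v\<close>;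
  the coefficient of \<^term>\<open>v\<close> is what keeps the image on the hyperboloid.\<close>

definition horo_shift :: "real \<Rightarrow> 'n::finite lor \<Rightarrow> 'n lor \<Rightarrow> 'n lor" where
  "horo_shift e v p = e *\<^sub>R p + ((inverse e - e) / 2) *\<^sub>R v"

lemma lorentz_horo_shift:
  assumes "lorentz p p = -1" "lorentz p v = -1" "lorentz v v = 0" "e \<noteq> 0"
  shows "lorentz (horo_shift e v p) (horo_shift e v p) = -1"
    and "lorentz (horo_shift e v p) (inverse e *\<^sub>R v) = -1"
proof -
  have "lorentz v p = -1"
    using assms(2) lorentz_commute by metis
  then have "lorentz (horo_shift e v p) (horo_shift e v p) = - (e * e) - e * (inverse e - e)"
    using assms(1-3) by (simp add: horo_shift_def algebra_simps)
  then show "lorentz (horo_shift e v p) (horo_shift e v p) = -1"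
    using assms(4) by (simp add: algebra_simps)
  show "lorentz (horo_shift e v p) (inverse e *\<^sub>R v) = -1"
    using assms by (simp add: horo_shift_def)
qed

lemma horo_shift_mem_horo_set:
  assumes p: "p \<in> horo_set v" and vv: "lorentz v v = 0" and tv: "time_part v > 0" and e: "e > 0"
  shows "horo_shift e v p \<in> horo_set (inverse e *\<^sub>R v)"
proof -
  have "lorentz p p = -1" "lorentz p v = -1"
    using p by (auto simp: horo_set_def hyp_space_def)
  then have qq: "lorentz (horo_shift e v p) (horo_shift e v p) = -1"
    and qv: "lorentz (horo_shift e v p) (inverse e *\<^sub>R v) = -1"
    using lorentz_horo_shift[OF _ _ vv, of p e] e by simp_all
  have "lorentz (inverse e *\<^sub>R v) (inverse e *\<^sub>R v) = 0" "time_part (inverse e *\<^sub>R v) > 0"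
    using vv tv e by (simp_all add: time_part_def)
  then have "time_part (horo_shift e v p) > 0"
    by (rule time_part_pos_of_lorentz_neg[OF qq]) (use qv in simp)
  then show ?thesis
    using qq qv by (simp add: horo_set_def hyp_space_def time_part_def)
qed

lemma horo_shift_inverse:
  "e \<noteq> 0 \<Longrightarrow> horo_shift (inverse e) (inverse e *\<^sub>R v) (horo_shift e v p) = p"
proof -
  assume "e \<noteq> 0"
  then have "inverse e * ((inverse e - e) / 2) + (e - inverse e) / 2 * inverse e = 0"
    by (simp add: field_simps)
  then have "(inverse e * ((inverse e - e) / 2)) *\<^sub>R v + ((e - inverse e) / 2 * inverse e) *\<^sub>R v = 0"
    by (metis scaleR_add_left scaleR_zero_left)
  with \<open>e \<noteq> 0\<close> show ?thesis
    unfolding horo_shift_def by (simp add: scaleR_add_right)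
qed

lemma horo_shift_image_horo_set:
  assumes vv: "lorentz v v = 0" and tv: "time_part v > 0" and e: "e > 0"
  shows "horo_shift e v ` horo_set v = horo_set (inverse e *\<^sub>R v)"
proof
  show "horo_shift e v ` horo_set v \<subseteq> horo_set (inverse e *\<^sub>R v)"
    using horo_shift_mem_horo_set[OF _ vv tv e] by blast
  show "horo_set (inverse e *\<^sub>R v) \<subseteq> horo_shift e v ` horo_set v"
  proof
    fix q
    assume "q \<in> horo_set (inverse e *\<^sub>R v)"
    moreover have "lorentz (inverse e *\<^sub>R v) (inverse e *\<^sub>R v) = 0" "time_part (inverse e *\<^sub>R v) > 0"
      using vv tv e by (simp_all add: time_part_def)
    ultimately have "horo_shift (inverse e) (inverse e *\<^sub>R v) q
        \<in> horo_set (inverse (inverse e) *\<^sub>R inverse e *\<^sub>R v)"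
      using e by (intro horo_shift_mem_horo_set) simp_all
    then have "horo_shift (inverse e) (inverse e *\<^sub>R v) q \<in> horo_set v"
      using e by simp
    moreover have "horo_shift e v (horo_shift (inverse e) (inverse e *\<^sub>R v) q) = q"
      using horo_shift_inverse[of "inverse e" "inverse e *\<^sub>R v" q] e by simp
    ultimately show "q \<in> horo_shift e v ` horo_set v"
      by (metis imageI)
  qed
qed

lemma dif_horo_shift:
  assumes "F differentiable (at x)"
  shows "dif (\<lambda>y. horo_shift e v (F y)) x = (\<lambda>h. e *\<^sub>R dif F x h)"
proof (rule dif_eqI)
  have "((\<lambda>y. horo_shift e v (F y)) has_derivative (\<lambda>h. e *\<^sub>R dif F x h + 0)) (at x)"
    unfolding horo_shift_def
    by (intro has_derivative_add has_derivative_scaleR_right has_derivative_const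
        has_derivative_dif assms)
  then show "((\<lambda>y. horo_shift e v (F y)) has_derivative (\<lambda>h. e *\<^sub>R dif F x h)) (at x)"
    by simp
qed

lemma immersion_H_horo_shift:
  assumes F: "immersion_H F" and Fv: "\<And>y. lorentz (F y) v = -1"
    and vv: "lorentz v v = 0" and tv: "time_part v > 0" and e: "e > 0"
  shows "immersion_H (\<lambda>x. horo_shift e v (F x))"
  unfolding immersion_H_def
proof (intro allI conjI)
  fix x
  have Fx: "F differentiable (at x)" and inj: "inj (dif F x)"
    using F by (auto simp: immersion_H_def)
  have "F x \<in> horo_set v"
    using F Fv by (simp add: immersion_H_def horo_set_def)
  then show "horo_shift e v (F x) \<in> hyp_space"
    using horo_shift_mem_horo_set[OF _ vv tv e] by (simp add: horo_set_def)
  show "(\<lambda>y. horo_shift e v (F y)) differentiable (at x)"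
    using Fx unfolding horo_shift_def by (intro derivative_intros)
  show "inj (dif (\<lambda>y. horo_shift e v (F y)) x)"
    using inj e by (simp add: dif_horo_shift[OF Fx] inj_def)
qed

lemma horo_shift_exp_minus: "horo_shift (exp (- x)) v p = exp (- x) *\<^sub>R p + sinh x *\<^sub>R v"
  by (simp add: horo_shift_def sinh_field_def exp_minus)

lemma has_vector_derivative_horo_shift_exp:
  "((\<lambda>s. horo_shift (exp (- (a * s))) v p) has_vector_derivative
      a *\<^sub>R (cosh (a * t) *\<^sub>R v - exp (- (a * t)) *\<^sub>R p)) (at t)"
proof -
  have "((\<lambda>s. exp (- (a * s))) has_real_derivative - a * exp (- (a * t))) (at t)"
    and "((\<lambda>s. sinh (a * s)) has_real_derivative a * cosh (a * t)) (at t)"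
    by (auto intro!: derivative_eq_intros)
  then have "((\<lambda>s. exp (- (a * s)) *\<^sub>R p + sinh (a * s) *\<^sub>R v) has_vector_derivative
      (exp (- (a * t)) *\<^sub>R 0 + (- a * exp (- (a * t))) *\<^sub>R p)
        + (sinh (a * t) *\<^sub>R 0 + (a * cosh (a * t)) *\<^sub>R v)) (at t)"
    by (intro has_vector_derivative_add has_vector_derivative_scaleR has_vector_derivative_const)
  then show ?thesis
    by (simp add: horo_shift_exp_minus algebra_simps)
qed

lemma horosphere_range_horo_shift:
  assumes rF: "range F = horo_set v" and vv: "lorentz v v = 0" and tv: "time_part v > 0"
    and e: "e > 0"
  shows "horosphere (range (\<lambda>x. horo_shift e v (F x)))"
proof -
  have "range (\<lambda>x. horo_shift e v (F x)) = horo_set (inverse e *\<^sub>R v)"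
    using horo_shift_image_horo_set[OF vv tv e] by (simp add: rF image_image[symmetric])
  then show ?thesis
    unfolding horosphere_iff using vv tv e
    by (intro exI[of _ "inverse e *\<^sub>R v"]) (simp add: time_part_def)
qed

lemma cosh_sinh_horo_normal_eq_horo_shift:
  assumes "\<kappa> * \<kappa> = 1"
  shows "cosh x *\<^sub>R p + (\<kappa> * sinh x) *\<^sub>R (\<kappa> *\<^sub>R (v - p)) = horo_shift (exp (- x)) v p"
proof -
  have "(\<kappa> * sinh x) *\<^sub>R (\<kappa> *\<^sub>R (v - p)) = sinh x *\<^sub>R (v - p)"
    using assms by (simp add: scaleR_scaleR mult.commute mult.left_commute)
  then show ?thesis
    using cosh_minus_sinh[of x]
    by (simp add: horo_shift_exp_minus algebra_simps flip: scaleR_diff_left)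
qed

section \<open>Mean curvature flow of horospheres\<close>

lemma mcf_solution_horo_shift:
  fixes F :: "real^'n \<Rightarrow> 'n::finite lor" and \<kappa> :: real
  assumes F: "immersion_H F" and Fv: "\<And>y. lorentz (F y) v = -1"
    and vv: "lorentz v v = 0" and tv: "time_part v > 0" and \<kappa>: "\<kappa> * \<kappa> = 1"
  shows "mcf_solution UNIV F (\<lambda>x t. horo_shift (exp (- (real CARD('n) * t))) v (F x))"
proof -
  define n where "n = real CARD('n)"
  define G where "G t x = horo_shift (exp (- (n * t))) v (F x)" for t x
  define w where "w t = inverse (exp (- (n * t))) *\<^sub>R v" for t
  define Nh where "Nh x t = \<kappa> *\<^sub>R (w t - G t x)" for x t
  have G: "immersion_H (G t)" for t
    unfolding G_def using immersion_H_horo_shift[OF F Fv vv tv] by simp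
  have Gw: "lorentz (G t y) (w t) = -1" for t y
    unfolding G_def w_def
    by (rule lorentz_horo_shift(2)[OF immersion_H_lorentz_self[OF F] Fv vv]) simp
  have ww: "lorentz (w t) (w t) = 0" for t
    using vv by (simp add: w_def)
  have normal: "unit_normal (G t) (\<lambda>x. Nh x t)" for t
    unfolding Nh_def by (rule unit_normal_horo[OF G Gw ww \<kappa>])
  have mean_curv: "mean_curv (G t) (\<lambda>x. Nh x t) x = \<kappa> * n" for t x
    unfolding Nh_def n_def using shape_op_horo_normal[OF G] by (rule mean_curv_eq_scaleR)
  have flow: "((\<lambda>s. G s x) has_vector_derivative (\<kappa> * n) *\<^sub>R Nh x t) (at t)" for x t
  proof -
    have "G t x = exp (- (n * t)) *\<^sub>R F x + sinh (n * t) *\<^sub>R v" "w t = exp (n * t) *\<^sub>R v"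
      by (simp_all only: G_def w_def horo_shift_exp_minus) (simp add: exp_minus)
    moreover have "(\<kappa> * n) *\<^sub>R Nh x t = n *\<^sub>R (w t - G t x)"
      using \<kappa> by (simp add: Nh_def scaleR_scaleR mult.commute mult.left_commute)
    ultimately have "(\<kappa> * n) *\<^sub>R Nh x t
        = n *\<^sub>R ((exp (n * t) - sinh (n * t)) *\<^sub>R v - exp (- (n * t)) *\<^sub>R F x)"
      by (simp add: algebra_simps)
    also have "exp (n * t) - sinh (n * t) = cosh (n * t)"
      using cosh_plus_sinh[of "n * t"] by simp
    finally show ?thesis
      unfolding G_def using has_vector_derivative_horo_shift_exp by simp
  qed
  have G_eq: "(\<lambda>x t. horo_shift (exp (- (real CARD('n) * t))) v (F x)) = (\<lambda>x t. G t x)"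
    by (simp add: G_def n_def)
  have "G 0 x = F x" for x
    by (simp add: G_def horo_shift_def)
  then show ?thesis
    unfolding G_eq mcf_solution_def using G normal mean_curv flow
    by (intro conjI allI ballI exI[of _ Nh]) simp_all
qed

theorem proposition2:
  fixes F N :: "real^'n \<Rightarrow> 'n::finite lor" and \<kappa> :: real
  assumes "immersion_H F"
    and "horosphere (range F)"
    and "unit_normal F N"
    and "\<forall>x. principal_curvatures F N x = {\<kappa>}"
    and "\<kappa> = 1 \<or> \<kappa> = -1"
  shows "mcf_solution UNIV F
           (\<lambda>x t. cosh (real CARD('n) * t) *\<^sub>R F x + (\<kappa> * sinh (real CARD('n) * t)) *\<^sub>R N x)
       \<and> (\<forall>t. horosphere (range (\<lambda>x. cosh (real CARD('n) * t) *\<^sub>R F x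
                                   + (\<kappa> * sinh (real CARD('n) * t)) *\<^sub>R N x)))"
proof -
  obtain v where vv: "lorentz v v = 0" and tv: "time_part v > 0" and rF: "range F = horo_set v"
    using assms(2) by (auto simp: horosphere_iff)
  have Fv: "lorentz (F y) v = -1" for y
    using rF by (auto simp: horo_set_def)
  have \<kappa>: "\<kappa> * \<kappa> = 1"
    using assms(5) by auto
  have N: "N x = \<kappa> *\<^sub>R (v - F x)" for x
    using unit_normal_horo_eq[OF assms(1) Fv vv assms(3)] assms(4) by blast
  have flow: "cosh (real CARD('n) * t) *\<^sub>R F x + (\<kappa> * sinh (real CARD('n) * t)) *\<^sub>R N x
      = horo_shift (exp (- (real CARD('n) * t))) v (F x)" for x t
    by (simp only: N cosh_sinh_horo_normal_eq_horo_shift[OF \<kappa>])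
  show ?thesis
    using mcf_solution_horo_shift[OF assms(1) Fv vv tv \<kappa>] horosphere_range_horo_shift[OF rF vv tv]
    by (simp add: flow)
qed

end
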